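(* Let $k$ be a field and $Q,q\in k^\times$ with $f_d(Q,q)=\prod_{i=1-d}^{d-1}(Q^{-2}+q^{2i})\neq0$. For each sign $\pm$, the square formed by the quotient maps $\otimes^d\to S^d$, $\otimes^d\to\otimes^d_\pm$, $\otimes^d_\pm\to S^d_\pm$ and the induced map $p_\pm:S^d\to S^d_\pm$ is a pushout; likewise the square with $\wedge^d$ and $\wedge^d_\pm$ in place of $S^d$ and $S^d_\pm$ is a pushout.
   Context: $\mathcal H^B_{Q,q}(d)$ is generated by $T_0,\dots,T_{d-1}$ with relations $(T_0+Q)(T_0-Q^{-1})=0$; $(T_i+q)(T_i-q^{-1})=0$ ($i>0$); $T_iT_{i+1}T_i=T_{i+1}T_iT_{i+1}$ ($i>0$); $T_0T_1T_0T_1=T_1T_0T_1T_0$; $T_iT_j=T_jT_i$ ($|i-j|>1$); $K_i=T_{i-1}\cdots T_1T_0T_1\cdots T_{i-1}$. $V_n$ has basis $v_i$, $i\in\mathbb I_n$ ($\mathbb I_{2s}=\{-\tfrac{2s-1}{2},\dots,\tfrac{2s-1}{2}\}$ half-integers, $\mathbb I_{2s+1}=\{-s,\dots,s\}$); the right action on $V_n^{\otimes d}$: $T_i$ ($i>0$) on factors $i,i+1$ by $R_q$: $v_i\otimes v_j\mapsto q^{-1}v_i\otimes v_j$ ($i=j$), $v_j\otimes v_i$ ($i<j$), $v_j\otimes v_i+(q^{-1}-q)v_i\otimes v_j$ ($i>j$); $T_0$ on the first factor by $K_Q$: $v_i\mapsto Q^{-1}v_i$ ($i=0$), $v_{-i}$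 ($i>0$), $v_{-i}+(Q^{-1}-Q)v_i$ ($i<0$). All functors are evaluated at $V_n$ and are functorial for $\mathrm{Hom}_{\mathcal H^B_{Q,q}(d)}(V_n^{\otimes d},V_m^{\otimes d})$. $\otimes^d(V_n)=V_n^{\otimes d}$; $S^dV_n=V_n^{\otimes d}/\mathrm{span}\{(T_i-q^{-1})w: i>0\}$; $\wedge^dV_n=V_n^{\otimes d}/\mathrm{span}\{(T_i+q)w:i>0\}$; $S^d_+V_n=V_n^{\otimes d}/\mathrm{span}\{(T_0-Q^{-1})w,(T_i-q^{-1})w\}$; $S^d_-V_n=V_n^{\otimes d}/\mathrm{span}\{(T_0+Q)w,(T_i-q^{-1})w\}$; $\wedge^d_+V_n=V_n^{\otimes d}/\mathrm{span}\{(T_0-Q^{-1})w,(T_i+q)w\}$; $\wedge^d_-V_n=V_n^{\otimes d}/\mathrm{span}\{(T_0+Q)w,(T_i+q)w\}$ ($w\in V_n^{\otimes d}$, $i>0$). Eigenvalues of $K_i$ are of the form $Q^{-1}q^{2j}$ ("positive") or $-Qq^{2j}$ ("negative"), disjoint when $f_d(Q,q)\ne0$; $\otimes^d_+$ is the largest quotient of $\otimes^d$ on which each $K_i$ has only positive eigenvalues and $\otimes^d_-$ the direct summand on which each $K_i$ has only negative eigenvalues, viewed as a quotient of $\otimes^d$ via the projection. *)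

theory Defs
  imports Main "HOL.Vector_Spaces"
begin

text \<open>Basis indices of V_n: the half-integer/integer index i in I_n is stored as the
  integer 2i.  So the index set is {m. |m| <= n-1, m = n-1 mod 2}; order, sign and
  negation are preserved by this encoding.\<close>

definition idx :: "nat \<Rightarrow> int set" where
  "idx n = {m. \<bar>m\<bar> \<le> int n - 1 \<and> (m + int n + 1) mod 2 = 0}"

definition tuples :: "nat \<Rightarrow> nat \<Rightarrow> int list set" where
  "tuples n d = {x. length x = d \<and> set x \<subseteq> idx n}"

text \<open>V_n^{tensor d} as coefficient functions supported on the basis tuples.\<close>
definition tens :: "nat \<Rightarrow> nat \<Rightarrow> (int list \<Rightarrow> 'a::field) set" where
  "tens n d = {w. \<forall>x. w x \<noteq> 0 \<longrightarrow> x \<in> tuples n d}"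

definition ebas :: "int list \<Rightarrow> int list \<Rightarrow> 'a::field" where
  "ebas x = (\<lambda>y. if y = x then 1 else 0)"

text \<open>Image of the basis tensor x under the generator T_i (right action):
  T_0 acts by K_Q on the first factor, T_i (i>0) by R_q on factors i, i+1.\<close>
definition Tb :: "'a::field \<Rightarrow> 'a \<Rightarrow> nat \<Rightarrow> int list \<Rightarrow> int list \<Rightarrow> 'a" where
  "Tb Q q i x =
    (if i = 0 then
       (let a = x ! 0; s = x[0 := - a] in
        if a = 0 then (\<lambda>y. inverse Q * ebas x y)
        else if a > 0 then ebas s
        else (\<lambda>y. ebas s y + (inverse Q - Q) * ebas x y))
     else
       (let a = x ! (i - 1); b = x ! i; s = x[i - 1 := b, i := a] in
        if a = b then (\<lambda>y. inverse q * ebas x y)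
        else if a < b then ebas s
        else (\<lambda>y. ebas s y + (inverse q - q) * ebas x y)))"

definition Tact :: "'a::field \<Rightarrow> 'a \<Rightarrow> nat \<Rightarrow> nat \<Rightarrow> nat \<Rightarrow> (int list \<Rightarrow> 'a) \<Rightarrow> (int list \<Rightarrow> 'a)" where
  "Tact Q q n d i w = (\<lambda>y. \<Sum>x\<in>tuples n d. w x * Tb Q q i x y)"

text \<open>Right action of K_i = T_{i-1} ... T_1 T_0 T_1 ... T_{i-1}:  w K_i.\<close>
definition Kact :: "'a::field \<Rightarrow> 'a \<Rightarrow> nat \<Rightarrow> nat \<Rightarrow> nat \<Rightarrow> (int list \<Rightarrow> 'a) \<Rightarrow> (int list \<Rightarrow> 'a)" where
  "Kact Q q n d i w = fold (Tact Q q n d) (rev [1..<i] @ 0 # [1..<i]) w"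

definition f_poly :: "nat \<Rightarrow> 'a::field \<Rightarrow> 'a \<Rightarrow> 'a" where
  "f_poly d Q q = (\<Prod>i\<in>{1 - int d..int d - 1}. inverse (Q^2) + q powi (2 * i))"

definition closed_sub :: "(int list \<Rightarrow> 'a::field) set \<Rightarrow> bool" where
  "closed_sub W \<longleftrightarrow> (\<lambda>y. 0) \<in> W \<and> (\<forall>u\<in>W. \<forall>v\<in>W. (\<lambda>y. u y + v y) \<in> W)
      \<and> (\<forall>c. \<forall>u\<in>W. (\<lambda>y. c * u y) \<in> W)"

definition lspan :: "(int list \<Rightarrow> 'a::field) set \<Rightarrow> (int list \<Rightarrow> 'a) set" where
  "lspan S = \<Inter>{W. closed_sub W \<and> S \<subseteq> W}"

definition sym_rels where
  "sym_rels Q q n d = {(\<lambda>y. Tact Q q n d i w y - inverse q * w y) | i w. 0 < i \<and> i < d \<and> w \<in> tens n d}"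

definition wedge_rels where
  "wedge_rels Q q n d = {(\<lambda>y. Tact Q q n d i w y + q * w y) | i w. 0 < i \<and> i < d \<and> w \<in> tens n d}"

text \<open>Relation for T_0: sign True means T_0 - Q^{-1}, False means T_0 + Q.\<close>
definition T0_rels where
  "T0_rels sg Q q n d = {(\<lambda>y. Tact Q q n d 0 w y - (if sg then inverse Q else - Q) * w y) | w.
        0 < d \<and> w \<in> tens n d}"

text \<open>Kernels of the quotient maps from V_n^{tensor d}.\<close>
definition sym_ker where "sym_ker Q q n d = lspan (sym_rels Q q n d)"
definition wedge_ker where "wedge_ker Q q n d = lspan (wedge_rels Q q n d)"
definition symS_ker where "symS_ker sg Q q n d = lspan (T0_rels sg Q q n d \<union> sym_rels Q q n d)"
definition wedgeS_ker where "wedgeS_ker sg Q q n d = lspan (T0_rels sg Q q n d \<union> wedge_rels Q q n d)"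

definition sgn_eig :: "bool \<Rightarrow> nat \<Rightarrow> 'a::field \<Rightarrow> 'a \<Rightarrow> 'a \<Rightarrow> bool" where
  "sgn_eig sg d Q q c \<longleftrightarrow>
     (\<exists>j::int. \<bar>j\<bar> < int d \<and> c = (if sg then inverse Q else - Q) * q powi (2 * j))"

text \<open>Kernel of the largest quotient of V_n^{tensor d} on which every K_i (1 <= i <= d)
  has only eigenvalues of the sign sg: intersection of all K-stable subspaces W such
  that every eigenvalue of every K_i on V/W has sign sg.\<close>
definition tens_ker where
  "tens_ker sg Q q n d = \<Inter>{W. W \<subseteq> tens n d \<and> closed_sub W
      \<and> (\<forall>i\<in>{1..d}. \<forall>w\<in>W. Kact Q q n d i w \<in> W)
      \<and> (\<forall>i\<in>{1..d}. \<forall>c. (\<exists>v\<in>tens n d. v \<notin> W \<and> (\<lambda>y. Kact Q q n d i v y - c * v y) \<in> W)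
             \<longrightarrow> sgn_eig sg d Q q c)}"

definition lin_on :: "(int list \<Rightarrow> 'a::field) set \<Rightarrow> ('a \<Rightarrow> 'z::ab_group_add \<Rightarrow> 'z)
     \<Rightarrow> ((int list \<Rightarrow> 'a) \<Rightarrow> 'z) \<Rightarrow> bool" where
  "lin_on V sZ f \<longleftrightarrow> (\<forall>u\<in>V. \<forall>v\<in>V. f (\<lambda>y. u y + v y) = f u + f v)
      \<and> (\<forall>c. \<forall>u\<in>V. f (\<lambda>y. c * u y) = sZ c (f u))"

definition vanish :: "(int list \<Rightarrow> 'a) set \<Rightarrow> ((int list \<Rightarrow> 'a) \<Rightarrow> 'z::ab_group_add) \<Rightarrow> bool" where
  "vanish N f \<longleftrightarrow> (\<forall>u\<in>N. f u = 0)"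

text \<open>The square of quotient maps V \<rightarrow> V/A, V \<rightarrow> V/B, V/A \<rightarrow> V/C, V/B \<rightarrow> V/C
  (which exist iff A, B \<subseteq> C) is a pushout of k-vector spaces, tested against
  all k-vector spaces Z of type 'z.  A linear map V/N \<rightarrow> Z is represented by the
  composite V \<rightarrow> V/N \<rightarrow> Z, i.e. a linear map on V vanishing on N; two such maps
  are equal iff they agree on V.\<close>
definition quot_pushout :: "'z::ab_group_add itself \<Rightarrow> (int list \<Rightarrow> 'a::field) set
     \<Rightarrow> (int list \<Rightarrow> 'a) set \<Rightarrow> (int list \<Rightarrow> 'a) set \<Rightarrow> (int list \<Rightarrow> 'a) set \<Rightarrow> bool" where
  "quot_pushout (_ :: 'z itself) V A B C \<longleftrightarrow> A \<subseteq> C \<and> B \<subseteq> C \<and>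
     (\<forall>(sZ :: 'a \<Rightarrow> 'z \<Rightarrow> 'z). vector_space sZ \<longrightarrow>
       (\<forall>u v. lin_on V sZ u \<and> vanish A u \<and> lin_on V sZ v \<and> vanish B v \<and> (\<forall>x\<in>V. u x = v x)
         \<longrightarrow> (\<exists>h. lin_on V sZ h \<and> vanish C h \<and> (\<forall>x\<in>V. h x = u x) \<and> (\<forall>x\<in>V. h x = v x)
              \<and> (\<forall>h'. lin_on V sZ h' \<and> vanish C h' \<and> (\<forall>x\<in>V. h' x = u x) \<and> (\<forall>x\<in>V. h' x = v x)
                    \<longrightarrow> (\<forall>x\<in>V. h' x = h x)))))"

end

theory Submission
  imports Defs
begin

text \<open>Write A for the kernel of the quotient to S^d (resp. the exterior power), B for the
  kernel of the quotient to the tensor power of sign sg, and C for the kernel of the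
  quotient to S^d_sg (resp. its exterior analogue).  The square is a pushout as soon as
  C = A + B.  Modulo C every generator T_i acts by a scalar, hence each K_i acts by a scalar
  of sign sg, so B is contained in C.  Conversely, the quadratic relation of T_0 makes
  (T_0 - c) w, for c the T_0-eigenvalue of sign sg, an eigenvector of T_0 = K_1 for the other
  root; that root has the opposite sign, which f_d(Q,q) \<noteq> 0 forbids from being of sign sg.
  Hence the T_0-relations lie in B and C \<subseteq> A + B.\<close>

abbreviation T0_eig :: "bool \<Rightarrow> 'a::field \<Rightarrow> 'a" where
  "T0_eig sg Q \<equiv> if sg then inverse Q else - Q"

lemma closed_sub_zero: "closed_sub W \<Longrightarrow> (\<lambda>y. 0) \<in> W"
  unfolding closed_sub_def by auto

lemma closed_sub_add: "closed_sub W \<Longrightarrow> u \<in> W \<Longrightarrow> v \<in> W \<Longrightarrow> (\<lambda>y. u y + v y) \<in> W"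
  unfolding closed_sub_def by auto

lemma closed_sub_scale: "closed_sub W \<Longrightarrow> u \<in> W \<Longrightarrow> (\<lambda>y. c * u y) \<in> W"
  unfolding closed_sub_def by auto

lemma closed_sub_diff:
  assumes W: "closed_sub W" and "u \<in> W" "v \<in> W"
  shows "(\<lambda>y. u y - v y) \<in> W"
proof -
  have "(\<lambda>y. u y + (- 1) * v y) \<in> W"
    using assms by (intro closed_sub_add closed_sub_scale)
  then show ?thesis by simp
qed

lemma closed_sub_tens: "closed_sub (tens n d)"
  unfolding closed_sub_def tens_def by (auto, metis add.right_neutral)

lemma lspan_closed_sub: "closed_sub (lspan S)"
  unfolding lspan_def closed_sub_def by auto

lemma lspan_superset: "S \<subseteq> lspan S"
  unfolding lspan_def by auto

lemma lspan_least: "closed_sub W \<Longrightarrow> S \<subseteq> W \<Longrightarrow> lspan S \<subseteq> W"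
  unfolding lspan_def by auto

lemma lspan_mono: "S \<subseteq> T \<Longrightarrow> lspan S \<subseteq> lspan T"
  unfolding lspan_def by auto

definition sub_sum :: "(int list \<Rightarrow> 'a::field) set \<Rightarrow> (int list \<Rightarrow> 'a) set \<Rightarrow> (int list \<Rightarrow> 'a) set"
  where "sub_sum A B = {(\<lambda>y. a y + b y) | a b. a \<in> A \<and> b \<in> B}"

lemma sub_sum_memI: "a \<in> A \<Longrightarrow> b \<in> B \<Longrightarrow> (\<lambda>y. a y + b y) \<in> sub_sum A B"
  unfolding sub_sum_def by blast

lemma sub_sum_left: "closed_sub B \<Longrightarrow> a \<in> A \<Longrightarrow> a \<in> sub_sum A B"
  using sub_sum_memI[of a A "\<lambda>y. 0" B] closed_sub_zero by auto

lemma sub_sum_right: "closed_sub A \<Longrightarrow> b \<in> B \<Longrightarrow> b \<in> sub_sum A B"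
  using sub_sum_memI[of "\<lambda>y. 0" A b B] closed_sub_zero by auto

lemma closed_sub_sub_sum:
  assumes A: "closed_sub A" and B: "closed_sub B"
  shows "closed_sub (sub_sum A B)"
  unfolding closed_sub_def
proof (intro conjI ballI allI)
  show "(\<lambda>y. 0) \<in> sub_sum A B"
    using sub_sum_left[OF B closed_sub_zero[OF A]] .
next
  fix u v assume "u \<in> sub_sum A B" "v \<in> sub_sum A B"
  then obtain a b a' b' where a: "a \<in> A" "a' \<in> A" and b: "b \<in> B" "b' \<in> B"
    and uv: "u = (\<lambda>y. a y + b y)" "v = (\<lambda>y. a' y + b' y)"
    unfolding sub_sum_def by blast
  have "(\<lambda>y. (a y + a' y) + (b y + b' y)) \<in> sub_sum A B"
    using a b A B by (intro sub_sum_memI closed_sub_add)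
  then show "(\<lambda>y. u y + v y) \<in> sub_sum A B"
    unfolding uv by (simp add: algebra_simps)
next
  fix c u assume "u \<in> sub_sum A B"
  then obtain a b where a: "a \<in> A" and b: "b \<in> B" and u: "u = (\<lambda>y. a y + b y)"
    unfolding sub_sum_def by blast
  have "(\<lambda>y. c * a y + c * b y) \<in> sub_sum A B"
    using a b A B by (intro sub_sum_memI closed_sub_scale)
  then show "(\<lambda>y. c * u y) \<in> sub_sum A B"
    unfolding u by (simp add: algebra_simps)
qed

text \<open>The mediating map is u itself: it vanishes on A + B.\<close>

lemma quot_pushout_if_sub_sum:
  assumes AV: "A \<subseteq> V" and BV: "B \<subseteq> V" and "A \<subseteq> C" "B \<subseteq> C"
    and CS: "C \<subseteq> sub_sum A B"
  shows "quot_pushout TYPE('z::ab_group_add) V A B C"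
  unfolding quot_pushout_def
proof (intro conjI assms allI impI)
  fix sZ :: "'a \<Rightarrow> 'z \<Rightarrow> 'z" and u v :: "(int list \<Rightarrow> 'a) \<Rightarrow> 'z"
  assume h: "lin_on V sZ u \<and> vanish A u \<and> lin_on V sZ v \<and> vanish B v \<and> (\<forall>x\<in>V. u x = v x)"
  have "vanish C u" unfolding vanish_def
  proof
    fix c assume "c \<in> C"
    then obtain a b where c: "c = (\<lambda>y. a y + b y)" and a: "a \<in> A" and b: "b \<in> B"
      using CS unfolding sub_sum_def by blast
    have "u c = u a + u b" using h a b AV BV unfolding c lin_on_def by blast
    then show "u c = 0" using h a b BV unfolding vanish_def by auto
  qed
  then show "\<exists>h. lin_on V sZ h \<and> vanish C h \<and> (\<forall>x\<in>V. h x = u x) \<and> (\<forall>x\<in>V. h x = v x)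
      \<and> (\<forall>h'. lin_on V sZ h' \<and> vanish C h' \<and> (\<forall>x\<in>V. h' x = u x) \<and> (\<forall>x\<in>V. h' x = v x)
            \<longrightarrow> (\<forall>x\<in>V. h' x = h x))"
    using h by (intro exI[of _ u]) auto
qed

lemma fold_scalar_mod:
  assumes C: "closed_sub C"
    and step: "\<And>i w. i \<in> set l \<Longrightarrow> w \<in> V \<Longrightarrow> f i w \<in> V \<and> (\<lambda>y. f i w y - \<chi> i * w y) \<in> C"
    and w: "w \<in> V"
  shows "fold f l w \<in> V \<and> (\<lambda>y. fold f l w y - prod_list (map \<chi> l) * w y) \<in> C"
  using step w
proof (induction l arbitrary: w)
  case Nil
  then show ?case using closed_sub_zero[OF C] by simp
next
  case (Cons i l)
  let ?w' = "f i w" and ?p = "prod_list (map \<chi> l)"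
  have w': "?w' \<in> V" and g: "(\<lambda>y. ?w' y - \<chi> i * w y) \<in> C"
    using Cons.prems by auto
  have IH: "fold f l ?w' \<in> V" "(\<lambda>y. fold f l ?w' y - ?p * ?w' y) \<in> C"
    using Cons.IH[OF _ w'] Cons.prems(1) by auto
  have "(\<lambda>y. (fold f l ?w' y - ?p * ?w' y) + ?p * (?w' y - \<chi> i * w y)) \<in> C"
    using closed_sub_add[OF C IH(2) closed_sub_scale[OF C g]] .
  then show ?case using IH(1) by (simp add: algebra_simps)
qed

lemma eigenvalue_mod_unique:
  assumes C: "closed_sub C" and v: "v \<notin> C"
    and c: "(\<lambda>y. u y - c * v y) \<in> C" and k: "(\<lambda>y. u y - k * v y) \<in> C"
  shows "c = k"
proof (rule ccontr)
  assume ne: "c \<noteq> k"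
  have "(\<lambda>y. inverse (k - c) * ((u y - c * v y) - (u y - k * v y))) \<in> C"
    using closed_sub_scale[OF C closed_sub_diff[OF C c k]] .
  moreover have "(\<lambda>y. inverse (k - c) * ((u y - c * v y) - (u y - k * v y))) = v"
    using ne by (auto simp: field_simps)
  ultimately show False using v by simp
qed

subsection \<open>The action of the generators\<close>

lemma finite_tuples: "finite (tuples n d)"
proof -
  have "idx n \<subseteq> {- int n..int n}" unfolding idx_def by auto
  then have "finite (idx n)" using finite_subset by blast
  moreover have "tuples n d = {x. set x \<subseteq> idx n \<and> length x = d}"
    unfolding tuples_def by auto
  ultimately show ?thesis using finite_lists_length_eq by simp
qed

lemma idx_uminus: "a \<in> idx n \<Longrightarrow> - a \<in> idx n"
  unfolding idx_def by auto

lemma tuples_update: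
  "x \<in> tuples n d \<Longrightarrow> a \<in> idx n \<Longrightarrow> x[i := a] \<in> tuples n d"
  unfolding tuples_def using set_update_subset_insert[of x i a] by auto

lemma tuples_nth: "x \<in> tuples n d \<Longrightarrow> i < d \<Longrightarrow> x ! i \<in> idx n"
  unfolding tuples_def by auto

lemma Tb_tens:
  assumes x: "x \<in> tuples n d" and i: "i < d"
  shows "Tb Q q i x \<in> tens n d"
proof (cases "i = 0")
  case True
  then have "x[0 := - (x ! 0)] \<in> tuples n d"
    using x i by (intro tuples_update idx_uminus tuples_nth) auto
  then show ?thesis using True x unfolding Tb_def Let_def tens_def ebas_def by auto
next
  case False
  then have "x[i - 1 := x ! i, i := x ! (i - 1)] \<in> tuples n d"
    using x i by (intro tuples_update tuples_nth) auto
  then show ?thesis using False x unfolding Tb_def Let_def tens_def ebas_def by auto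
qed

lemma Tact_tens: "i < d \<Longrightarrow> Tact Q q n d i w \<in> tens n d"
  using Tb_tens unfolding Tact_def tens_def by (fastforce intro: sum.neutral)

lemma Tact_add: "Tact Q q n d i (\<lambda>y. u y + v y) = (\<lambda>y. Tact Q q n d i u y + Tact Q q n d i v y)"
  unfolding Tact_def by (simp add: algebra_simps sum.distrib)

lemma Tact_diff: "Tact Q q n d i (\<lambda>y. u y - v y) = (\<lambda>y. Tact Q q n d i u y - Tact Q q n d i v y)"
  unfolding Tact_def by (simp add: algebra_simps sum_subtractf)

lemma Tact_scale: "Tact Q q n d i (\<lambda>y. c * u y) = (\<lambda>y. c * Tact Q q n d i u y)"
  unfolding Tact_def by (simp add: sum_distrib_left mult.assoc)

lemma sum_tuples_ebas:
  assumes "s \<in> tuples n d"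
  shows "(\<Sum>x\<in>tuples n d. ebas s x * f x) = f s"
proof -
  have "(\<Sum>x\<in>tuples n d. ebas s x * f x) = (\<Sum>x\<in>tuples n d. if x = s then f x else 0)"
    by (rule sum.cong) (auto simp: ebas_def)
  then show ?thesis using assms finite_tuples by simp
qed

lemma Tact_ebas: "s \<in> tuples n d \<Longrightarrow> Tact Q q n d i (ebas s) = Tb Q q i s"
  unfolding Tact_def by (simp add: sum_tuples_ebas)

lemma Tb_T0_quadratic:
  assumes z: "z \<in> tuples n d" and d: "0 < d" and Q: "Q \<noteq> 0"
  shows "Tact Q q n d 0 (Tb Q q 0 z) = (\<lambda>y. (inverse Q - Q) * Tb Q q 0 z y + ebas z y)"
proof -
  define a where "a = z ! 0"
  define s where "s = z[0 := - a]"
  have s: "s \<in> tuples n d"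
    unfolding s_def a_def using z d by (intro tuples_update idx_uminus tuples_nth) auto
  have "length z = d" using z unfolding tuples_def by simp
  then have s0: "s ! 0 = - a" and ss: "s[0 := - (s ! 0)] = z"
    unfolding s_def a_def using d by auto
  have Tz: "Tb Q q 0 z = (if a = 0 then (\<lambda>y. inverse Q * ebas z y)
      else if a > 0 then ebas s else (\<lambda>y. ebas s y + (inverse Q - Q) * ebas z y))"
    unfolding Tb_def Let_def a_def s_def by simp
  have Ts: "Tb Q q 0 s = (if - a = 0 then (\<lambda>y. inverse Q * ebas s y)
      else if - a > 0 then ebas z else (\<lambda>y. ebas z y + (inverse Q - Q) * ebas s y))"
    using ss unfolding Tb_def Let_def s0 by simp
  consider "a = 0" | "a > 0" | "a < 0" by linarith
  then show ?thesis
  proof cases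
    case 1
    then have "Tact Q q n d 0 (Tb Q q 0 z) = (\<lambda>y. inverse Q * Tb Q q 0 z y)"
      using Tz Tact_scale[of Q q n d 0 "inverse Q" "ebas z"] Tact_ebas[OF z, of Q q 0] by simp
    then show ?thesis using Tz 1 Q by (auto simp: field_simps)
  next
    case 2
    then show ?thesis using Tz Ts Tact_ebas[OF s, of Q q 0] by (auto simp: algebra_simps)
  next
    case 3
    then have "Tact Q q n d 0 (Tb Q q 0 z) = (\<lambda>y. Tb Q q 0 s y + (inverse Q - Q) * Tb Q q 0 z y)"
      using Tz Tact_add[of Q q n d 0 "ebas s"] Tact_scale[of Q q n d 0 "inverse Q - Q" "ebas z"]
        Tact_ebas[OF s, of Q q 0] Tact_ebas[OF z, of Q q 0] by simp
    then show ?thesis using Ts 3 by (auto simp: algebra_simps)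
  qed
qed

lemma Tact_T0_quadratic:
  assumes w: "w \<in> tens n d" and d: "0 < d" and Q: "Q \<noteq> 0"
  shows "Tact Q q n d 0 (Tact Q q n d 0 w) = (\<lambda>y. (inverse Q - Q) * Tact Q q n d 0 w y + w y)"
proof
  fix y
  have "Tact Q q n d 0 (Tact Q q n d 0 w) y
      = (\<Sum>x\<in>tuples n d. \<Sum>z\<in>tuples n d. w z * (Tb Q q 0 z x * Tb Q q 0 x y))"
    unfolding Tact_def by (simp add: sum_distrib_right mult.assoc)
  also have "\<dots> = (\<Sum>z\<in>tuples n d. w z * Tact Q q n d 0 (Tb Q q 0 z) y)"
    unfolding Tact_def by (subst sum.swap) (simp add: sum_distrib_left)
  also have "\<dots> = (\<Sum>z\<in>tuples n d. w z * ((inverse Q - Q) * Tb Q q 0 z y + ebas z y))"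
    using Tb_T0_quadratic[OF _ d Q] by simp
  also have "\<dots> = (inverse Q - Q) * Tact Q q n d 0 w y + (\<Sum>z\<in>tuples n d. w z * ebas z y)"
    unfolding Tact_def by (simp add: distrib_left sum.distrib sum_distrib_left mult.left_commute)
  also have "(\<Sum>z\<in>tuples n d. w z * ebas z y) = w y"
  proof (cases "y \<in> tuples n d")
    case True
    then show ?thesis using sum_tuples_ebas[of y n d w] by (simp add: ebas_def mult.commute eq_commute)
  next
    case False
    then have "w y = 0" using w unfolding tens_def by auto
    then show ?thesis using False by (auto simp: ebas_def intro!: sum.neutral)
  qed
  finally show "Tact Q q n d 0 (Tact Q q n d 0 w) y = (inverse Q - Q) * Tact Q q n d 0 w y + w y" .
qed

lemma Tact_T0_eigenvector:
  assumes "w \<in> tens n d" and "0 < d" and Q: "Q \<noteq> 0"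
  shows "Tact Q q n d 0 (\<lambda>y. Tact Q q n d 0 w y - T0_eig sg Q * w y)
       = (\<lambda>y. T0_eig (\<not> sg) Q * (Tact Q q n d 0 w y - T0_eig sg Q * w y))"
  unfolding Tact_diff Tact_scale Tact_T0_quadratic[OF assms] using Q by (auto simp: field_simps)

subsection \<open>Signs of eigenvalues\<close>

lemma f_poly_zero_if:
  assumes "\<bar>m\<bar> < int d" and "inverse (Q ^ 2) + q powi (2 * m) = 0"
  shows "f_poly d Q q = 0"
proof -
  have "m \<in> {1 - int d..int d - 1}" using assms(1) by auto
  then show ?thesis
    unfolding f_poly_def using assms(2) by (metis finite_atLeastAtMost_int prod_zero_iff)
qed

lemma not_sgn_eig_opposite_T0_eig:
  assumes Q: "Q \<noteq> 0" and f: "f_poly d Q q \<noteq> 0"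
  shows "\<not> sgn_eig sg d Q q (T0_eig (\<not> sg) Q)"
proof
  assume "sgn_eig sg d Q q (T0_eig (\<not> sg) Q)"
  then obtain j where j: "\<bar>j\<bar> < int d"
    and c: "T0_eig (\<not> sg) Q = T0_eig sg Q * q powi (2 * j)"
    unfolding sgn_eig_def by blast
  show False
  proof (cases sg)
    case True
    then have c': "inverse Q * q powi (2 * j) = - Q" using c by simp
    have "q powi (2 * j) = Q * (inverse Q * q powi (2 * j))" using Q by simp
    also have "\<dots> = - (Q ^ 2)" unfolding c' by (simp add: power2_eq_square)
    finally have "q powi (2 * j) = - (Q ^ 2)" .
    then have "inverse (Q ^ 2) + q powi (2 * - j) = 0"
      by (simp add: power_int_minus inverse_minus_eq)
    then show False using f_poly_zero_if[of "- j" d Q q] j f by simp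
  next
    case False
    then have c': "- Q * q powi (2 * j) = inverse Q" using c by simp
    have "q powi (2 * j) = inverse (- Q) * (- Q * q powi (2 * j))" using Q by simp
    also have "\<dots> = - inverse (Q ^ 2)"
      unfolding c' by (simp add: power2_eq_square inverse_mult_distrib)
    finally have "q powi (2 * j) = - inverse (Q ^ 2)" .
    then show False using f_poly_zero_if[of j d Q q] j f by simp
  qed
qed

lemma tens_ker_closed_sub: "closed_sub (tens_ker sg Q q n d)"
  unfolding tens_ker_def closed_sub_def by auto

lemma T0_rel_in_tens_ker:
  assumes Q: "Q \<noteq> 0" and f: "f_poly d Q q \<noteq> 0" and d: "0 < d" and w: "w \<in> tens n d"
  shows "(\<lambda>y. Tact Q q n d 0 w y - T0_eig sg Q * w y) \<in> tens_ker sg Q q n d"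
  unfolding tens_ker_def
proof (rule InterI, clarify)
  fix W assume W: "closed_sub W"
    and eig: "\<forall>i\<in>{1..d}. \<forall>c. (\<exists>v\<in>tens n d. v \<notin> W \<and> (\<lambda>y. Kact Q q n d i v y - c * v y) \<in> W)
      \<longrightarrow> sgn_eig sg d Q q c"
  define v where "v = (\<lambda>y. Tact Q q n d 0 w y - T0_eig sg Q * w y)"
  have v: "v \<in> tens n d"
    unfolding v_def using w d
    by (intro closed_sub_diff[OF closed_sub_tens] Tact_tens closed_sub_scale[OF closed_sub_tens])
  have "(\<lambda>y. Kact Q q n d 1 v y - T0_eig (\<not> sg) Q * v y) = (\<lambda>y. 0)"
    unfolding Kact_def v_def using Tact_T0_eigenvector[OF w d Q, where sg = sg] by simp
  then have K1: "(\<lambda>y. Kact Q q n d 1 v y - T0_eig (\<not> sg) Q * v y) \<in> W"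
    using closed_sub_zero[OF W] by simp
  have "1 \<in> {1..d}" using d by simp
  then have "v \<notin> W \<Longrightarrow> sgn_eig sg d Q q (T0_eig (\<not> sg) Q)"
    using eig v K1 by blast
  then show "v \<in> W" using not_sgn_eig_opposite_T0_eig[OF Q f] by blast
qed

lemma tens_ker_subset:
  assumes W: "closed_sub W" and Wt: "W \<subseteq> tens n d"
    and k_sgn: "\<And>i. i \<in> {1..d} \<Longrightarrow> sgn_eig sg d Q q (k i)"
    and k_mod: "\<And>i v. i \<in> {1..d} \<Longrightarrow> v \<in> tens n d \<Longrightarrow> (\<lambda>y. Kact Q q n d i v y - k i * v y) \<in> W"
  shows "tens_ker sg Q q n d \<subseteq> W"
  unfolding tens_ker_def
proof (rule Inter_lower, safe)
  show "closed_sub W" "\<And>x. x \<in> W \<Longrightarrow> x \<in> tens n d" using W Wt by auto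
next
  fix i w assume i: "i \<in> {1..d}" and w: "w \<in> W"
  have "(\<lambda>y. (Kact Q q n d i w y - k i * w y) + k i * w y) \<in> W"
    using closed_sub_add[OF W k_mod[OF i] closed_sub_scale[OF W w]] w Wt by blast
  then show "Kact Q q n d i w \<in> W" by simp
next
  fix i c v assume i: "i \<in> {1..d}" and "v \<in> tens n d" "v \<notin> W"
    and "(\<lambda>y. Kact Q q n d i v y - c * v y) \<in> W"
  then have "c = k i" using eigenvalue_mod_unique[OF W] k_mod by blast
  then show "sgn_eig sg d Q q c" using k_sgn[OF i] by simp
qed

lemma sgn_eig_K_scalar:
  assumes c: "c ^ 2 = q ^ 2 \<or> c ^ 2 = inverse q ^ 2" and i: "i \<in> {1..d}"
  shows "sgn_eig sg d Q q (T0_eig sg Q * c ^ (2 * (i - 1)))"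
proof -
  have cp: "c ^ (2 * (i - 1)) = (c ^ 2) ^ (i - 1)" by (simp add: power_mult)
  have e: "2 * (int i - 1) = int (2 * (i - 1))" using i by auto
  obtain j where "\<bar>j\<bar> < int d" and "c ^ (2 * (i - 1)) = q powi (2 * j)"
  proof (cases "c ^ 2 = q ^ 2")
    case True
    then show ?thesis
      using that[of "int i - 1"] i cp unfolding e power_int_of_nat by (simp add: power_mult)
  next
    case False
    then have "c ^ 2 = inverse q ^ 2" using c by blast
    then show ?thesis
      using that[of "- (int i - 1)"] i cp
      unfolding mult_minus_right e power_int_minus power_int_of_nat
      by (simp add: power_mult power_inverse)
  qed
  then show ?thesis unfolding sgn_eig_def by auto
qed

subsection \<open>The pushout squares\<close>

definition Ti_rels :: "'a::field \<Rightarrow> 'a \<Rightarrow> 'a \<Rightarrow> nat \<Rightarrow> nat \<Rightarrow> (int list \<Rightarrow> 'a) set" where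
  "Ti_rels c Q q n d = {(\<lambda>y. Tact Q q n d i w y - c * w y) | i w. 0 < i \<and> i < d \<and> w \<in> tens n d}"

lemma sym_rels_eq_Ti_rels: "sym_rels Q q n d = Ti_rels (inverse q) Q q n d"
  unfolding sym_rels_def Ti_rels_def by simp

lemma wedge_rels_eq_Ti_rels: "wedge_rels Q q n d = Ti_rels (- q) Q q n d"
  unfolding wedge_rels_def Ti_rels_def by simp

lemma lspan_rels_subset_tens: "lspan (T0_rels sg Q q n d \<union> Ti_rels c Q q n d) \<subseteq> tens n d"
proof (rule lspan_least[OF closed_sub_tens], rule subsetI)
  fix x assume "x \<in> T0_rels sg Q q n d \<union> Ti_rels c Q q n d"
  then obtain i w c' where "x = (\<lambda>y. Tact Q q n d i w y - c' * w y)" "i < d" "w \<in> tens n d"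
    unfolding T0_rels_def Ti_rels_def by blast
  then show "x \<in> tens n d"
    by (metis Tact_tens closed_sub_diff closed_sub_scale closed_sub_tens)
qed

lemma Tact_scalar_mod_rels:
  assumes "w \<in> tens n d" and "i < d"
  shows "(\<lambda>y. Tact Q q n d i w y - (if i = 0 then T0_eig sg Q else c) * w y)
    \<in> lspan (T0_rels sg Q q n d \<union> Ti_rels c Q q n d)"
proof -
  have "(\<lambda>y. Tact Q q n d i w y - (if i = 0 then T0_eig sg Q else c) * w y)
      \<in> T0_rels sg Q q n d \<union> Ti_rels c Q q n d"
    using assms unfolding T0_rels_def Ti_rels_def by (cases "i = 0") auto
  then show ?thesis using lspan_superset by blast
qed

lemma Kact_scalar_mod_rels:
  assumes i: "i \<in> {1..d}" and v: "v \<in> tens n d"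
  shows "(\<lambda>y. Kact Q q n d i v y - (T0_eig sg Q * c ^ (2 * (i - 1))) * v y)
    \<in> lspan (T0_rels sg Q q n d \<union> Ti_rels c Q q n d)"
proof -
  define \<chi> where "\<chi> j = (if j = 0 then T0_eig sg Q else c)" for j :: nat
  let ?l = "rev [1..<i] @ 0 # [1..<i]"
  have "map \<chi> [1..<i] = map (\<lambda>_. c) [1..<i]"
    by (rule map_cong) (auto simp: \<chi>_def)
  then have "map \<chi> [1..<i] = replicate (i - 1) c"
    by (simp add: map_replicate_const)
  then have "prod_list (map \<chi> ?l) = T0_eig sg Q * c ^ (2 * (i - 1))"
    by (simp add: \<chi>_def rev_map[symmetric] mult_2 power_add)
  moreover have "Tact Q q n d j w \<in> tens n d \<and>
      (\<lambda>y. Tact Q q n d j w y - \<chi> j * w y) \<in> lspan (T0_rels sg Q q n d \<union> Ti_rels c Q q n d)"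
    if "j \<in> set ?l" and "w \<in> tens n d" for j w
  proof -
    have j: "j < d" using i that(1) by auto
    show ?thesis
      unfolding \<chi>_def using Tact_tens[OF j] Tact_scalar_mod_rels[OF that(2) j] by simp
  qed
  ultimately show ?thesis
    using fold_scalar_mod[OF lspan_closed_sub _ v, of ?l "Tact Q q n d" \<chi>]
    unfolding Kact_def by simp
qed

lemma quot_pushout_rels:
  assumes Q: "Q \<noteq> 0" and f: "f_poly d Q q \<noteq> 0" and c: "c ^ 2 = q ^ 2 \<or> c ^ 2 = inverse q ^ 2"
  shows "quot_pushout TYPE('z::ab_group_add) (tens n d) (lspan (Ti_rels c Q q n d))
    (tens_ker sg Q q n d) (lspan (T0_rels sg Q q n d \<union> Ti_rels c Q q n d))"
proof -
  let ?A = "lspan (Ti_rels c Q q n d)" and ?B = "tens_ker sg Q q n d"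
    and ?C = "lspan (T0_rels sg Q q n d \<union> Ti_rels c Q q n d)"
  have AC: "?A \<subseteq> ?C" by (rule lspan_mono) blast
  have BC: "?B \<subseteq> ?C"
  proof (rule tens_ker_subset[where k = "\<lambda>i. T0_eig sg Q * c ^ (2 * (i - 1))"])
    show "closed_sub ?C" by (rule lspan_closed_sub)
    show "?C \<subseteq> tens n d" by (rule lspan_rels_subset_tens)
  qed (simp_all only: sgn_eig_K_scalar[OF c] Kact_scalar_mod_rels)
  have "?C \<subseteq> sub_sum ?A ?B"
  proof (rule lspan_least[OF closed_sub_sub_sum[OF lspan_closed_sub tens_ker_closed_sub]], safe)
    fix x assume "x \<in> T0_rels sg Q q n d"
    then obtain w where "x = (\<lambda>y. Tact Q q n d 0 w y - T0_eig sg Q * w y)"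
      and "0 < d" and "w \<in> tens n d"
      unfolding T0_rels_def by blast
    then have "x \<in> ?B" using T0_rel_in_tens_ker[OF Q f] by simp
    then show "x \<in> sub_sum ?A ?B" by (rule sub_sum_right[OF lspan_closed_sub])
  next
    fix x assume "x \<in> Ti_rels c Q q n d"
    then have "x \<in> ?A" using lspan_superset by blast
    then show "x \<in> sub_sum ?A ?B" by (rule sub_sum_left[OF tens_ker_closed_sub])
  qed
  moreover have "?A \<subseteq> tens n d" "?B \<subseteq> tens n d"
    using AC BC lspan_rels_subset_tens by (blast, blast)
  ultimately show ?thesis using AC BC by (intro quot_pushout_if_sub_sum)
qed

theorem proposition7p8:
  fixes Q q :: "'a::field" and d :: nat
  assumes "Q \<noteq> 0" and "q \<noteq> 0" and "f_poly d Q q \<noteq> 0"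
  shows "\<forall>sg::bool. \<forall>n::nat.
     quot_pushout TYPE('z::ab_group_add) (tens n d) (sym_ker Q q n d) (tens_ker sg Q q n d)
        (symS_ker sg Q q n d)
   \<and> quot_pushout TYPE('z) (tens n d) (wedge_ker Q q n d) (tens_ker sg Q q n d)
        (wedgeS_ker sg Q q n d)"
proof (intro allI conjI)
  fix sg n
  show "quot_pushout TYPE('z) (tens n d) (sym_ker Q q n d) (tens_ker sg Q q n d)
      (symS_ker sg Q q n d)"
    unfolding sym_ker_def symS_ker_def sym_rels_eq_Ti_rels
    using assms(1,3) by (rule quot_pushout_rels) (simp add: power_inverse)
  show "quot_pushout TYPE('z) (tens n d) (wedge_ker Q q n d) (tens_ker sg Q q n d)
      (wedgeS_ker sg Q q n d)"
    unfolding wedge_ker_def wedgeS_ker_def wedge_rels_eq_Ti_rels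
    using assms(1,3) by (rule quot_pushout_rels) simp
qed

end
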